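(* Let $n\ge 2$, $k\ge 1$, and let $\pi$ be an even permutation of the vertex set $\{0,\dots,k+1\}$ of $K_{k+2}$. Then $c_{n,k}\simeq \pi\circ c_{n,k}$ as graph homomorphisms $\overline{SG}_{n,k}\to K_{k+2}$.
   Context: Let $m=2n+k$. A subset $S\subseteq\{0,\dots,m-1\}$ is semi-stable if $\{i,i+1\}\not\subseteq S$ for all $0\le i\le m-2$. The semi-stable Kneser graph $\overline{SG}_{n,k}$ has as vertices the semi-stable $n$-element subsets of $\{0,\dots,m-1\}$, two being adjacent iff they are disjoint. $K_{k+2}$ is the loopless complete graph on $\{0,\dots,k+1\}$, and $c_{n,k}\colon\overline{SG}_{n,k}\to K_{k+2}$ is the canonical colouring $S\mapsto\min S$. For graphs $G,H$ and maps $f,g\colon V(G)\to V(H)$, write $f\sim g$ if $(f(u),g(v))\in E(H)$ for all $(u,v)\in E(G)$. For graph homomorphisms $f,g\colon G\to H$, $f\simeq g$ means there are graph homomorphisms $f=f_0,f_1,\dots,f_N=g$ ($N\ge0$) with $f_{i}\sim f_{i+1}$ for all $i$. *)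

theory Defs
  imports "HOL-Combinatorics.Permutations"
begin

definition semi_stable :: "nat \<Rightarrow> nat set \<Rightarrow> bool" where
  "semi_stable m S \<longleftrightarrow> S \<subseteq> {..<m} \<and> (\<forall>i. i + 2 \<le> m \<longrightarrow> \<not> {i, i+1} \<subseteq> S)"

definition SG_verts :: "nat \<Rightarrow> nat \<Rightarrow> nat set set" where
  "SG_verts n k = {S. semi_stable (2*n+k) S \<and> card S = n}"

definition SG_adj :: "nat set \<Rightarrow> nat set \<Rightarrow> bool" where
  "SG_adj S T \<longleftrightarrow> S \<inter> T = {}"

definition K_verts :: "nat \<Rightarrow> nat set" where
  "K_verts k = {0..k+1}"

definition K_adj :: "nat \<Rightarrow> nat \<Rightarrow> bool" where
  "K_adj x y \<longleftrightarrow> x \<noteq> y"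

definition canon_col :: "nat set \<Rightarrow> nat" where
  "canon_col S = Min S"

definition graph_hom :: "'a set \<Rightarrow> ('a \<Rightarrow> 'a \<Rightarrow> bool) \<Rightarrow> 'b set \<Rightarrow> ('b \<Rightarrow> 'b \<Rightarrow> bool) \<Rightarrow> ('a \<Rightarrow> 'b) \<Rightarrow> bool" where
  "graph_hom VG EG VH EH f \<longleftrightarrow> (\<forall>u\<in>VG. f u \<in> VH) \<and> (\<forall>u\<in>VG. \<forall>v\<in>VG. EG u v \<longrightarrow> EH (f u) (f v))"

definition map_sim :: "'a set \<Rightarrow> ('a \<Rightarrow> 'a \<Rightarrow> bool) \<Rightarrow> ('b \<Rightarrow> 'b \<Rightarrow> bool) \<Rightarrow> ('a \<Rightarrow> 'b) \<Rightarrow> ('a \<Rightarrow> 'b) \<Rightarrow> bool" where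
  "map_sim VG EG EH f g \<longleftrightarrow> (\<forall>u\<in>VG. \<forall>v\<in>VG. EG u v \<longrightarrow> EH (f u) (g v))"

definition hom_homotopic :: "'a set \<Rightarrow> ('a \<Rightarrow> 'a \<Rightarrow> bool) \<Rightarrow> 'b set \<Rightarrow> ('b \<Rightarrow> 'b \<Rightarrow> bool) \<Rightarrow> ('a \<Rightarrow> 'b) \<Rightarrow> ('a \<Rightarrow> 'b) \<Rightarrow> bool" where
  "hom_homotopic VG EG VH EH f g \<longleftrightarrow>
     graph_hom VG EG VH EH f \<and> graph_hom VG EG VH EH g \<and>
     (\<exists>N::nat. \<exists>h :: nat \<Rightarrow> 'a \<Rightarrow> 'b.
        (\<forall>u\<in>VG. h 0 u = f u) \<and> (\<forall>u\<in>VG. h N u = g u) \<and>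
        (\<forall>i\<le>N. graph_hom VG EG VH EH (h i)) \<and>
        (\<forall>i<N. map_sim VG EG EH (h i) (h (Suc i))))"

end

theory Submission
  imports Defs
begin

text \<open>Since the even permutations are generated by 3-cycles and post-composition with a
  permutation preserves homotopy, it suffices to show \<open>c \<simeq> \<sigma> \<circ> c\<close> for every 3-cycle \<open>\<sigma>\<close>. For \<open>k = 1\<close> every vertex \<open>S\<close> maps to the pair of its two
  smallest elements, a vertex of \<open>SG\<^sub>2\<^sub>,\<^sub>1\<close>, where an explicit walk of six recolourings does the job.
  In the step \<open>k \<rightarrow> k + 1\<close>, a 3-cycle fixing the top colour is handled on the subgraph
  \<open>SG\<^sub>n\<^sub>,\<^sub>k\<close> (the remaining vertices all contain \<open>2n + k\<close> and can keep the top colour),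
  a 3-cycle fixing colour \<open>0\<close> on the vertices avoiding \<open>0\<close>, which shift down into \<open>SG\<^sub>n\<^sub>,\<^sub>k\<close>;
  any other 3-cycle is a product of two of these kinds.\<close>

section \<open>Homotopy of graph homomorphisms\<close>

lemma graph_hom_cong:
  assumes "graph_hom V E C F f" "\<forall>u\<in>V. f u = f' u"
  shows "graph_hom V E C F f'"
  using assms unfolding graph_hom_def by auto

lemma hom_homotopic_imp_graph_hom:
  assumes "hom_homotopic V E C F f g"
  shows "graph_hom V E C F f" "graph_hom V E C F g"
  using assms unfolding hom_homotopic_def by auto

lemma hom_homotopic_refl:
  assumes "graph_hom V E C F f"
  shows "hom_homotopic V E C F f f"
  unfolding hom_homotopic_def using assms by (intro conjI exI[of _ 0] exI[of _ "\<lambda>_. f"]) auto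

lemma hom_homotopic_step:
  assumes "graph_hom V E C F f" "graph_hom V E C F g" "map_sim V E F f g"
  shows "hom_homotopic V E C F f g"
  unfolding hom_homotopic_def using assms
  by (intro conjI exI[of _ 1] exI[of _ "\<lambda>i. if i = 0 then f else g"]) auto

lemma hom_homotopic_cong:
  assumes "hom_homotopic V E C F f g" "\<forall>u\<in>V. f u = f' u" "\<forall>u\<in>V. g u = g' u"
  shows "hom_homotopic V E C F f' g'"
  using assms unfolding hom_homotopic_def by (auto intro: graph_hom_cong)

lemma hom_homotopic_trans:
  assumes "hom_homotopic V E C F f g" "hom_homotopic V E C F g k"
  shows "hom_homotopic V E C F f k"
proof -
  from assms(1) obtain N1 h1 where A: "\<forall>u\<in>V. h1 0 u = f u" "\<forall>u\<in>V. h1 N1 u = g u"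
    "\<forall>i\<le>N1. graph_hom V E C F (h1 i)" "\<forall>i<N1. map_sim V E F (h1 i) (h1 (Suc i))"
    and hf: "graph_hom V E C F f"
    unfolding hom_homotopic_def by blast
  from assms(2) obtain N2 h2 where B: "\<forall>u\<in>V. h2 0 u = g u" "\<forall>u\<in>V. h2 N2 u = k u"
    "\<forall>i\<le>N2. graph_hom V E C F (h2 i)" "\<forall>i<N2. map_sim V E F (h2 i) (h2 (Suc i))"
    and hk: "graph_hom V E C F k"
    unfolding hom_homotopic_def by blast
  define h where "h i = (if i \<le> N1 then h1 i else h2 (i - N1))" for i
  have joint: "\<forall>u\<in>V. h N1 u = h2 0 u"
    using A B by (simp add: h_def)
  have "map_sim V E F (h i) (h (Suc i))" if i: "i < N1 + N2" for i
  proof (cases "i < N1")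
    case True
    thus ?thesis using A by (simp add: h_def)
  next
    case False
    hence ms: "map_sim V E F (h2 (i - N1)) (h2 (Suc (i - N1)))" using B i by simp
    have "h (Suc i) = h2 (Suc (i - N1))" using False by (simp add: h_def Suc_diff_le)
    moreover have "\<forall>u\<in>V. h2 (i - N1) u = h i u"
      using False joint by (cases "i = N1") (auto simp: h_def)
    ultimately show ?thesis using ms unfolding map_sim_def by auto
  qed
  moreover have "\<forall>u\<in>V. h 0 u = f u" "\<forall>u\<in>V. h (N1 + N2) u = k u"
    "\<forall>i\<le>N1+N2. graph_hom V E C F (h i)"
    using A B by (auto simp: h_def)
  ultimately show ?thesis unfolding hom_homotopic_def using hf hk by blast
qed

lemma hom_homotopic_transfer:
  assumes "hom_homotopic V E C F f g"
    and hom: "\<And>h. graph_hom V E C F h \<Longrightarrow> graph_hom V' E' C' F' (T h)"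
    and sim: "\<And>h h'. graph_hom V E C F h \<Longrightarrow> graph_hom V E C F h' \<Longrightarrow> map_sim V E F h h' \<Longrightarrow>
      map_sim V' E' F' (T h) (T h')"
    and local: "\<And>h h' u. \<forall>v\<in>V. h v = h' v \<Longrightarrow> u \<in> V' \<Longrightarrow> T h u = T h' u"
  shows "hom_homotopic V' E' C' F' (T f) (T g)"
proof -
  from assms(1) obtain N h where A: "\<forall>u\<in>V. h 0 u = f u" "\<forall>u\<in>V. h N u = g u"
    "\<forall>i\<le>N. graph_hom V E C F (h i)" "\<forall>i<N. map_sim V E F (h i) (h (Suc i))"
    and "graph_hom V E C F f" "graph_hom V E C F g"
    unfolding hom_homotopic_def by blast
  thus ?thesis unfolding hom_homotopic_def
    by (intro conjI hom exI[of _ N] exI[of _ "\<lambda>i. T (h i)"]) (auto intro: local sim hom)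
qed

lemma graph_hom_postcomp_inj:
  assumes "graph_hom V E C K_adj f" "inj_on p C" "p ` C \<subseteq> C'"
  shows "graph_hom V E C' K_adj (p \<circ> f)"
  using assms unfolding graph_hom_def K_adj_def by (auto dest: inj_onD)

lemma hom_homotopic_postcomp_inj:
  assumes "hom_homotopic V E C K_adj f g" "inj_on p C" "p ` C \<subseteq> C'"
  shows "hom_homotopic V E C' K_adj (p \<circ> f) (p \<circ> g)"
  using assms(1)
proof (rule hom_homotopic_transfer)
  show "map_sim V E K_adj (p \<circ> h) (p \<circ> h')"
    if "graph_hom V E C K_adj h" "graph_hom V E C K_adj h'" "map_sim V E K_adj h h'" for h h'
    using that assms(2) unfolding graph_hom_def map_sim_def K_adj_def by (auto dest: inj_onD)
qed (use graph_hom_postcomp_inj[OF _ assms(2,3)] in \<open>auto simp: o_def\<close>)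

lemma hom_homotopic_precomp:
  assumes "hom_homotopic W E' C F f g" "\<forall>u\<in>V. q u \<in> W"
    and "\<forall>u\<in>V. \<forall>v\<in>V. E u v \<longrightarrow> E' (q u) (q v)"
  shows "hom_homotopic V E C F (f \<circ> q) (g \<circ> q)"
  using assms(1) by (rule hom_homotopic_transfer)
    (use assms(2,3) in \<open>auto simp: graph_hom_def map_sim_def\<close>)

lemma hom_homotopic_extend:
  assumes "hom_homotopic V1 E CA K_adj f g"
    and r: "\<forall>u\<in>V-V1. r u \<in> CB" "\<forall>u\<in>V-V1. \<forall>v\<in>V-V1. E u v \<longrightarrow> r u \<noteq> r v"
    and "CA \<inter> CB = {}" "CA \<union> CB \<subseteq> C"
  shows "hom_homotopic V E C K_adj (\<lambda>u. if u \<in> V1 then f u else r u)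
     (\<lambda>u. if u \<in> V1 then g u else r u)"
proof -
  let ?ext = "\<lambda>h u. if u \<in> V1 then h u else r u"
  have sim: "map_sim V E K_adj (?ext h) (?ext h')"
    if h: "graph_hom V1 E CA K_adj h" "graph_hom V1 E CA K_adj h'" and s: "map_sim V1 E K_adj h h'"
    for h h'
    unfolding map_sim_def K_adj_def
  proof (intro ballI impI)
    fix u v assume uv: "u \<in> V" "v \<in> V" "E u v"
    have in_CA: "h w \<in> CA" "h' w \<in> CA" if "w \<in> V1" for w using h that unfolding graph_hom_def by auto
    have in_CB: "r w \<in> CB" if "w \<in> V" "w \<notin> V1" for w using r(1) that by blast
    show "?ext h u \<noteq> ?ext h' v"
    proof (cases "u \<in> V1"; cases "v \<in> V1")
      assume "u \<in> V1" "v \<in> V1"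
      thus ?thesis using s uv unfolding map_sim_def K_adj_def by simp
    next
      assume "u \<notin> V1" "v \<notin> V1"
      thus ?thesis using r(2) uv by simp
    qed (use in_CA in_CB uv \<open>CA \<inter> CB = {}\<close> in \<open>simp; metis disjoint_iff\<close>)+
  qed
  have hom: "graph_hom V E C K_adj (?ext h)" if "graph_hom V1 E CA K_adj h" for h
    using sim[OF that that] that r \<open>CA \<union> CB \<subseteq> C\<close>
    unfolding graph_hom_def map_sim_def by auto
  show ?thesis
    by (rule hom_homotopic_transfer[where T = ?ext, OF assms(1) hom sim]) auto
qed

section \<open>Semi-stable sets\<close>

definition no_consecutive :: "nat set \<Rightarrow> bool" where
  "no_consecutive S \<longleftrightarrow> (\<forall>i. i \<in> S \<longrightarrow> Suc i \<notin> S)"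

lemma no_consecutive_subset: "no_consecutive S \<Longrightarrow> T \<subseteq> S \<Longrightarrow> no_consecutive T"
  unfolding no_consecutive_def by blast

lemma no_consecutive_Min_Max:
  "finite S \<Longrightarrow> card S = Suc n \<Longrightarrow> no_consecutive S \<Longrightarrow> Min S + 2 * n \<le> Max S"
proof (induction n arbitrary: S)
  case 0
  then obtain x where "S = {x}" by (metis One_nat_def card_1_singletonE)
  thus ?case by simp
next
  case (Suc n)
  define M where "M = Max S"
  define S' where "S' = S - {M}"
  have MS: "M \<in> S" unfolding M_def using Suc.prems by (intro Max_in) auto
  have fS': "finite S'" and cS': "card S' = Suc n"
    using Suc.prems MS by (simp_all add: S'_def)
  hence ne': "S' \<noteq> {}" by auto
  have "no_consecutive S'" using Suc.prems(3) by (rule no_consecutive_subset) (auto simp: S'_def)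
  hence IH: "Min S' + 2 * n \<le> Max S'" using Suc.IH fS' cS' by blast
  have m1: "Max S' \<in> S" "Max S' \<noteq> M" using Max_in[OF fS' ne'] by (auto simp: S'_def)
  hence "Max S' < M" using Suc.prems(1) by (simp add: M_def order.not_eq_order_implies_strict)
  moreover have "Suc (Max S') \<noteq> M" using m1(1) MS Suc.prems(3) unfolding no_consecutive_def by blast
  moreover have "Min S \<le> Min S'" using Min_antimono[of S' S] ne' Suc.prems(1) by (auto simp: S'_def)
  ultimately show ?case using IH by (simp add: M_def)
qed

lemma SG_verts_props:
  assumes "S \<in> SG_verts n k" "n \<ge> 1"
  shows "finite S" "S \<noteq> {}" "S \<subseteq> {..<2*n+k}" "no_consecutive S" "card S = n"
    "Min S + 2*(n-1) \<le> Max S" "Max S < 2*n+k"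
proof -
  have ss: "semi_stable (2*n+k) S" and c: "card S = n" using assms by (auto simp: SG_verts_def)
  show sub: "S \<subseteq> {..<2*n+k}" using ss by (simp add: semi_stable_def)
  show f: "finite S" using sub finite_subset by blast
  show ne: "S \<noteq> {}" using c assms(2) by auto
  show nc: "no_consecutive S" unfolding no_consecutive_def
  proof (intro allI impI notI)
    fix i assume "i \<in> S" "Suc i \<in> S"
    moreover from \<open>Suc i \<in> S\<close> have "i + 2 \<le> 2*n+k" using sub by auto
    ultimately show False using ss unfolding semi_stable_def by auto
  qed
  show "card S = n" by (fact c)
  show "Min S + 2*(n-1) \<le> Max S" using no_consecutive_Min_Max[OF f _ nc, of "n-1"] c assms(2) by simp
  show "Max S < 2*n+k" using sub f ne Max_in by blast
qed

lemma SG_verts_Min_le: "S \<in> SG_verts n k \<Longrightarrow> n \<ge> 1 \<Longrightarrow> Min S \<le> k+1"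
  using SG_verts_props[of S n k] by linarith

lemma SG_verts_Min_top:
  assumes "S \<in> SG_verts n k" "n \<ge> 1" "Min S = k+1"
  shows "2*n+k-1 \<in> S"
proof -
  have "Max S = 2*n+k-1" using SG_verts_props[OF assms(1,2)] assms(3) by linarith
  thus ?thesis using SG_verts_props[OF assms(1,2)] Max_in by metis
qed

lemma SG_verts_Suc_top: "S \<in> SG_verts n (Suc j) \<Longrightarrow> S \<notin> SG_verts n j \<Longrightarrow> 2*n+j \<in> S"
  unfolding SG_verts_def semi_stable_def by (auto simp: less_Suc_eq)

lemma Min_disjoint_neq:
  "finite S \<Longrightarrow> S \<noteq> {} \<Longrightarrow> finite T \<Longrightarrow> T \<noteq> {} \<Longrightarrow> S \<inter> T = {} \<Longrightarrow> Min S \<noteq> Min T"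
  by (metis Min_in disjoint_iff)

lemma canon_col_adj:
  "S \<in> SG_verts n k \<Longrightarrow> T \<in> SG_verts n k \<Longrightarrow> n \<ge> 1 \<Longrightarrow> SG_adj S T \<Longrightarrow> canon_col S \<noteq> canon_col T"
  unfolding canon_col_def SG_adj_def using SG_verts_props(1,2) Min_disjoint_neq by metis

lemma finite_K_verts: "finite (K_verts k)"
  by (simp add: K_verts_def)

lemma canon_col_graph_hom:
  assumes "n \<ge> 1" shows "graph_hom (SG_verts n k) SG_adj (K_verts k) K_adj canon_col"
  unfolding graph_hom_def K_adj_def
  using SG_verts_Min_le[OF _ assms] canon_col_adj[OF _ _ assms]
  by (auto simp: canon_col_def K_verts_def)

lemma SG_verts_shift_down:
  assumes S: "S \<in> SG_verts n (Suc j)" "0 \<notin> S" and n1: "n \<ge> 1"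
  shows "(\<lambda>x. x - 1) ` S \<in> SG_verts n j" "Suc (Min ((\<lambda>x. x - 1) ` S)) = Min S"
proof -
  have ss: "semi_stable (2*n + Suc j) S" "card S = n" using S by (auto simp: SG_verts_def)
  have pos: "x \<ge> 1" if "x \<in> S" for x using that S(2) by (cases x) auto
  have inj: "inj_on (\<lambda>x. x - 1) S" unfolding inj_on_def by (metis le_add_diff_inverse2 pos)
  have sub: "S \<subseteq> {..<2*n + Suc j}" using ss by (simp add: semi_stable_def)
  have "semi_stable (2*n+j) ((\<lambda>x. x - 1) ` S)"
    unfolding semi_stable_def
  proof (intro conjI allI impI notI)
    show "(\<lambda>x. x - 1) ` S \<subseteq> {..<2*n+j}" using sub pos by force
  next
    fix i assume i: "i + 2 \<le> 2*n+j" and "{i, i+1} \<subseteq> (\<lambda>x. x - 1) ` S"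
    then obtain x y where xy: "x \<in> S" "y \<in> S" "i = x - 1" "i + 1 = y - 1" by auto
    hence "x = i+1" "y = i+2" using pos by force+
    hence "{i+1, i+1+1} \<subseteq> S" using xy by auto
    moreover have "i + 1 + 2 \<le> 2*n + Suc j" using i by simp
    ultimately show False using ss(1) unfolding semi_stable_def by blast
  qed
  thus "(\<lambda>x. x - 1) ` S \<in> SG_verts n j" using card_image[OF inj] ss(2) by (simp add: SG_verts_def)
  have f: "finite S" "S \<noteq> {}" using SG_verts_props[OF S(1) n1] by auto
  have "(\<lambda>x. x - 1) (Min S) = Min ((\<lambda>x. x - 1) ` S)"
    by (rule mono_Min_commute[OF _ f]) (auto simp: mono_def)
  moreover have "Min S \<ge> 1" using pos f Min_in by blast
  ultimately show "Suc (Min ((\<lambda>x. x - 1) ` S)) = Min S" by simp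
qed

section \<open>3-cycles and even permutations\<close>

definition cycle3 :: "'a \<Rightarrow> 'a \<Rightarrow> 'a \<Rightarrow> 'a \<Rightarrow> 'a" where
  "cycle3 a b d x = (if x = a then b else if x = b then d else if x = d then a else x)"

lemma cycle3_inj: "distinct [a,b,d] \<Longrightarrow> inj (cycle3 a b d)"
  by (auto simp: inj_def cycle3_def split: if_splits)

lemma cycle3_in: "a \<in> C \<Longrightarrow> b \<in> C \<Longrightarrow> d \<in> C \<Longrightarrow> x \<in> C \<Longrightarrow> cycle3 a b d x \<in> C"
  by (simp add: cycle3_def)

lemma cycle3_rotate: "distinct [a,b,d] \<Longrightarrow> cycle3 a b d = cycle3 b d a"
  by (auto simp: cycle3_def fun_eq_iff)

lemma cycle3_split: "distinct [a,b,d,v] \<Longrightarrow> cycle3 a b d = cycle3 a b v \<circ> cycle3 b d v"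
  by (auto simp: cycle3_def fun_eq_iff)

lemma cycle3_inverse: "distinct [a,b,d] \<Longrightarrow> cycle3 a d b \<circ> cycle3 a b d = id"
  by (auto simp: fun_eq_iff cycle3_def)

lemma cycle3_eq_transpose: "distinct [a,b,d] \<Longrightarrow> cycle3 a b d = transpose a b \<circ> transpose b d"
  by (auto simp: cycle3_def fun_eq_iff transpose_def)

lemma evenperm_cycle3: "distinct [a,b,d] \<Longrightarrow> evenperm (cycle3 a b d)"
  by (simp add: cycle3_eq_transpose evenperm_comp permutation_swap_id evenperm_swap)

lemma cycle3_permutes:
  "distinct [a,b,d] \<Longrightarrow> a \<in> C \<Longrightarrow> b \<in> C \<Longrightarrow> d \<in> C \<Longrightarrow> cycle3 a b d permutes C"
  by (simp add: cycle3_eq_transpose permutes_compose permutes_swap_id)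

lemma cycle3_shift:
  "1 \<le> a \<Longrightarrow> 1 \<le> b \<Longrightarrow> 1 \<le> d \<Longrightarrow> 1 \<le> x \<Longrightarrow> Suc (cycle3 (a-1) (b-1) (d-1) (x-1)) = cycle3 a b d x"
  unfolding cycle3_def by (cases x; cases a; cases b; cases d) auto

lemma eq_transpose_if_moves_two:
  assumes "inj p" "p a = b" "a \<noteq> b" "\<forall>x. p x \<noteq> x \<longrightarrow> x = a \<or> x = b"
  shows "p = transpose a b"
proof
  fix x
  have "p b \<noteq> b" using assms(1-3) by (metis injD)
  moreover have "p (p b) \<noteq> p b" using calculation assms(1) by (metis injD)
  ultimately have "p b = a" using assms(2,4) by metis
  thus "p x = transpose a b x" using assms(2,4) by (cases "x = a \<or> x = b") auto
qed

text \<open>Composing with the 3-cycle \<open>(p a, a, d)\<close>, for a third point \<open>d\<close> moved by \<open>p\<close> (which exists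
  as \<open>p\<close> is not a transposition), fixes \<open>a\<close> and moves no new point.\<close>

lemma evenperm_cycle3_induct [consumes 3, case_names id cycle3]:
  assumes "p permutes C" "finite C" "evenperm p"
    and id: "P id"
    and cycle3: "\<And>a b d q. distinct [a,b,d] \<Longrightarrow> a \<in> C \<Longrightarrow> b \<in> C \<Longrightarrow> d \<in> C \<Longrightarrow>
      q permutes C \<Longrightarrow> evenperm q \<Longrightarrow> P q \<Longrightarrow> P (cycle3 a b d \<circ> q)"
  shows "P p"
  using assms(1,3)
proof (induction "card {x. p x \<noteq> x}" arbitrary: p rule: less_induct)
  case less
  have moved_in_C: "{x. p x \<noteq> x} \<subseteq> C" using permutes_not_in[OF less.prems(1)] by blast
  show ?case
  proof (cases "p = id")
    case True thus ?thesis using id by simp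
  next
    case False
    then obtain a where pa: "p a \<noteq> a" by (auto simp: fun_eq_iff)
    define b where "b = p a"
    have inj: "inj p" using less.prems(1) by (rule permutes_inj)
    have pb: "p b \<noteq> b" using pa inj by (metis b_def injD)
    have "\<exists>d. p d \<noteq> d \<and> d \<noteq> a \<and> d \<noteq> b"
    proof (rule ccontr)
      assume "\<nexists>d. p d \<noteq> d \<and> d \<noteq> a \<and> d \<noteq> b"
      hence "\<forall>x. p x \<noteq> x \<longrightarrow> x = a \<or> x = b" by blast
      hence "p = transpose a b" using eq_transpose_if_moves_two inj pa b_def by metis
      thus False using less.prems(2) evenperm_swap[of a b] pa b_def by metis
    qed
    then obtain d where pd: "p d \<noteq> d" "d \<noteq> a" "d \<noteq> b" by blast
    have dst: "distinct [b,a,d]" using pa pd by (auto simp: b_def)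
    have C: "a \<in> C" "b \<in> C" "d \<in> C" using moved_in_C pa pb pd by auto
    define q where "q = cycle3 b a d \<circ> p"
    have q_permutes: "q permutes C"
      unfolding q_def by (rule permutes_compose[OF less.prems(1) cycle3_permutes[OF dst C(2,1,3)]])
    have q_even: "evenperm q" unfolding q_def
      using evenperm_comp[OF permutes_imp_permutation[OF assms(2) cycle3_permutes[OF dst C(2,1,3)]]
          permutes_imp_permutation[OF assms(2) less.prems(1)]] evenperm_cycle3[OF dst] less.prems(2)
      by simp
    have fin: "finite {x. p x \<noteq> x}" using finite_subset[OF moved_in_C assms(2)] .
    have "q a = a" by (simp add: q_def cycle3_def flip: b_def)
    moreover have "q x = x" if "p x = x" for x
      using that pa pb pd by (auto simp: q_def cycle3_def)
    ultimately have "{x. q x \<noteq> x} \<subseteq> {x. p x \<noteq> x} - {a}" by auto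
    hence "card {x. q x \<noteq> x} \<le> card ({x. p x \<noteq> x} - {a})" using fin by (intro card_mono) auto
    also have "\<dots> < card {x. p x \<noteq> x}" using fin pa by (intro card_Diff1_less) auto
    finally have "P q" using less.hyps q_permutes q_even by blast
    moreover have "p = cycle3 b d a \<circ> q"
      using cycle3_inverse[of b a d] dst by (simp add: q_def o_assoc cycle3_rotate[of b d a])
    ultimately show ?thesis
      using cycle3[of b d a q] dst C q_permutes q_even by auto
  qed
qed

section \<open>Homotopy of the canonical colouring to its 3-cycle twists\<close>

definition cycles_homotopic :: "nat \<Rightarrow> nat \<Rightarrow> bool" where
  "cycles_homotopic n k \<longleftrightarrow> (\<forall>a b d. distinct [a,b,d] \<and> a \<le> k+1 \<and> b \<le> k+1 \<and> d \<le> k+1 \<longrightarrow>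
      hom_homotopic (SG_verts n k) SG_adj (K_verts k) K_adj canon_col (cycle3 a b d \<circ> canon_col))"

lemma cycle3_canon_col_graph_hom:
  assumes "n \<ge> 1" "distinct [a,b,d]" "a \<le> k+1" "b \<le> k+1" "d \<le> k+1"
  shows "graph_hom (SG_verts n k) SG_adj (K_verts k) K_adj (cycle3 a b d \<circ> canon_col)"
  by (rule graph_hom_postcomp_inj[OF canon_col_graph_hom[OF assms(1)]])
    (use assms inj_on_subset[OF cycle3_inj[OF assms(2)]] in \<open>auto simp: cycle3_def K_verts_def\<close>)

text \<open>The graph \<open>SG\<^sub>2\<^sub>,\<^sub>1\<close>, with each vertex \<open>{a, b}\<close>, \<open>a < b\<close>, encoded as the pair \<open>(a, b)\<close>.\<close>

definition SG21_pairs :: "(nat \<times> nat) set" where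
  "SG21_pairs = {(0,2),(0,3),(0,4),(1,3),(1,4),(2,4)}"

definition pairs_disjoint :: "nat \<times> nat \<Rightarrow> nat \<times> nat \<Rightarrow> bool" where
  "pairs_disjoint p q \<longleftrightarrow> fst p \<noteq> fst q \<and> fst p \<noteq> snd q \<and> snd p \<noteq> fst q \<and> snd p \<noteq> snd q"

text \<open>Each step of the walk recolours a single vertex.\<close>

definition SG21_walk :: "nat \<Rightarrow> nat \<times> nat \<Rightarrow> nat" where
  "SG21_walk i p = (if i = 0 then fst p
     else if p = (1,4) then 2
     else if p = (0,3) \<and> i \<ge> 2 then 1
     else if p = (2,4) \<and> i \<ge> 3 then 0
     else if p = (1,3) \<and> i \<ge> 4 then 2
     else if p = (0,2) \<and> i \<ge> 5 then 1
     else if p = (0,4) \<and> i \<ge> 6 then 1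
     else fst p)"

lemma SG21_walk_graph_hom: "i \<le> 6 \<Longrightarrow> graph_hom SG21_pairs pairs_disjoint {0..2} K_adj (SG21_walk i)"
  unfolding le_Suc_eq numeral_eq_Suc by (elim disjE)
    (simp_all add: graph_hom_def SG21_pairs_def pairs_disjoint_def K_adj_def SG21_walk_def)

lemma SG21_walk_map_sim:
  "i < 6 \<Longrightarrow> map_sim SG21_pairs pairs_disjoint K_adj (SG21_walk i) (SG21_walk (Suc i))"
  unfolding less_Suc_eq numeral_eq_Suc by (elim disjE)
    (simp_all add: map_sim_def SG21_pairs_def pairs_disjoint_def K_adj_def SG21_walk_def)

lemma SG21_fst_homotopic_cycle3:
  "hom_homotopic SG21_pairs pairs_disjoint {0..2} K_adj fst (cycle3 0 1 2 \<circ> fst)"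
  unfolding hom_homotopic_def
proof (intro conjI exI[of _ 6] exI[of _ SG21_walk])
  show "graph_hom SG21_pairs pairs_disjoint {0..2} K_adj fst"
    by (rule graph_hom_cong[OF SG21_walk_graph_hom[of 0]]) (simp_all add: SG21_walk_def)
  show "graph_hom SG21_pairs pairs_disjoint {0..2} K_adj (cycle3 0 1 2 \<circ> fst)"
    by (simp add: graph_hom_def SG21_pairs_def pairs_disjoint_def K_adj_def cycle3_def)
  show "\<forall>u\<in>SG21_pairs. SG21_walk 6 u = (cycle3 0 1 2 \<circ> fst) u"
    by (simp add: SG21_walk_def SG21_pairs_def cycle3_def)
qed (simp_all add: SG21_walk_def SG21_walk_graph_hom SG21_walk_map_sim)

definition two_smallest :: "nat set \<Rightarrow> nat \<times> nat" where
  "two_smallest S = (Min S, Min (S - {Min S}))"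

lemma two_smallest_props:
  assumes S: "S \<in> SG_verts n 1" and n: "n \<ge> 2"
  shows "two_smallest S \<in> SG21_pairs" "fst (two_smallest S) \<in> S" "snd (two_smallest S) \<in> S"
proof -
  have n1: "n \<ge> 1" using n by simp
  note P = SG_verts_props[OF S n1] n
  define a where "a = Min S"
  define S' where "S' = S - {a}"
  have aS: "a \<in> S" using P by (simp add: a_def)
  have fS': "finite S'" using P by (simp add: S'_def)
  have cS': "card S' = Suc (n - 2)" using P aS by (simp add: S'_def)
  hence ne': "S' \<noteq> {}" by auto
  have nc': "no_consecutive S'" using P(4) by (rule no_consecutive_subset) (auto simp: S'_def)
  define b where "b = Min S'"
  have bS: "b \<in> S" "b \<noteq> a" using Min_in[OF fS' ne'] by (auto simp: b_def S'_def)
  have "a \<le> b" using P bS by (simp add: a_def)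
  moreover have "Suc a \<noteq> b" using P(4) aS bS unfolding no_consecutive_def by blast
  ultimately have ab: "a + 2 \<le> b" using bS by linarith
  have "b + 2*(n-2) \<le> Max S'" using no_consecutive_Min_Max[OF fS' cS' nc'] by (simp add: b_def)
  moreover have "Max S' \<le> Max S" using fS' ne' P by (auto simp: S'_def intro!: Max_mono)
  ultimately have "b \<le> 4" using P by linarith
  hence "(a,b) \<in> SG21_pairs" using ab by (auto simp: SG21_pairs_def le_Suc_eq)
  moreover have "two_smallest S = (a,b)" by (simp add: two_smallest_def a_def b_def S'_def)
  ultimately show "two_smallest S \<in> SG21_pairs" "fst (two_smallest S) \<in> S"
    "snd (two_smallest S) \<in> S" using aS bS by auto
qed

lemma canon_col_homotopic_cycle3_012:
  assumes n: "n \<ge> 2"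
  shows "hom_homotopic (SG_verts n 1) SG_adj (K_verts 1) K_adj canon_col (cycle3 0 1 2 \<circ> canon_col)"
proof -
  have "hom_homotopic (SG_verts n 1) SG_adj {0..2} K_adj
      (fst \<circ> two_smallest) ((cycle3 0 1 2 \<circ> fst) \<circ> two_smallest)"
    using SG21_fst_homotopic_cycle3
  proof (rule hom_homotopic_precomp)
    show "\<forall>u\<in>SG_verts n 1. two_smallest u \<in> SG21_pairs" using two_smallest_props(1) n by blast
    show "\<forall>u\<in>SG_verts n 1. \<forall>v\<in>SG_verts n 1. SG_adj u v \<longrightarrow> pairs_disjoint (two_smallest u) (two_smallest v)"
    proof (intro ballI impI)
      fix u v assume uv: "u \<in> SG_verts n 1" "v \<in> SG_verts n 1" "SG_adj u v"
      have "x \<noteq> y" if "x \<in> u" "y \<in> v" for x y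
        using uv(3) that unfolding SG_adj_def by blast
      thus "pairs_disjoint (two_smallest u) (two_smallest v)"
        unfolding pairs_disjoint_def using two_smallest_props(2,3)[OF uv(1) n] two_smallest_props(2,3)[OF uv(2) n]
        by simp
    qed
  qed
  moreover have "K_verts 1 = {0..2}" by (simp add: K_verts_def)
  ultimately have "hom_homotopic (SG_verts n 1) SG_adj (K_verts 1) K_adj
      (fst \<circ> two_smallest) ((cycle3 0 1 2 \<circ> fst) \<circ> two_smallest)"
    by simp
  thus ?thesis by (rule hom_homotopic_cong) (simp_all add: two_smallest_def canon_col_def)
qed

lemma cycle3_on_012_cases:
  fixes a b d :: nat
  assumes "distinct [a,b,d]" "a \<le> 2" "b \<le> 2" "d \<le> 2"
  shows "cycle3 a b d = cycle3 0 1 2 \<or> cycle3 a b d = cycle3 0 2 1"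
proof -
  have "a \<in> {0,1,2}" "b \<in> {0,1,2}" "d \<in> {0,1,2}" using assms(2-4) by auto
  hence "(a,b,d) \<in> {(0,1,2), (1,2,0), (2,0,1), (0,2,1), (2,1,0), (1,0,2)}"
    using assms(1) by auto
  moreover have "cycle3 (1::nat) 2 0 = cycle3 0 1 2" "cycle3 (2::nat) 0 1 = cycle3 0 1 2"
    "cycle3 (2::nat) 1 0 = cycle3 0 2 1" "cycle3 (1::nat) 0 2 = cycle3 0 2 1"
    by (auto simp: fun_eq_iff cycle3_def)
  ultimately show ?thesis by auto
qed

lemma cycles_homotopic_base:
  assumes n: "n \<ge> 2" shows "cycles_homotopic n 1"
  unfolding cycles_homotopic_def
proof (intro allI impI, elim conjE)
  fix a b d :: nat assume dst: "distinct [a,b,d]" and le: "a \<le> 1 + 1" "b \<le> 1 + 1" "d \<le> 1 + 1"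
  let ?G = "\<lambda>f. hom_homotopic (SG_verts n 1) SG_adj (K_verts 1) K_adj canon_col (f \<circ> canon_col)"
  have s1: "?G (cycle3 0 1 2)" by (rule canon_col_homotopic_cycle3_012[OF n])
  have "hom_homotopic (SG_verts n 1) SG_adj (K_verts 1) K_adj (cycle3 0 1 2 \<circ> canon_col)
     (cycle3 0 1 2 \<circ> (cycle3 0 1 2 \<circ> canon_col))"
    by (rule hom_homotopic_postcomp_inj[OF s1]) (auto simp: K_verts_def cycle3_def inj_on_def)
  moreover have "cycle3 0 1 2 \<circ> (cycle3 0 1 2 \<circ> canon_col) = cycle3 (0::nat) 2 1 \<circ> canon_col"
    by (auto simp: fun_eq_iff cycle3_def)
  ultimately have s2: "?G (cycle3 0 2 1)" using hom_homotopic_trans[OF s1] by simp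
  show "?G (cycle3 a b d)" using cycle3_on_012_cases[OF dst] le s1 s2 by auto
qed

lemma cycles_homotopic_step_fixing_top:
  assumes n: "n \<ge> 2" and IH: "cycles_homotopic n j" and dst: "distinct [a,b,d]"
    and le: "a \<le> j+1" "b \<le> j+1" "d \<le> j+1"
  shows "hom_homotopic (SG_verts n (Suc j)) SG_adj (K_verts (Suc j)) K_adj canon_col (cycle3 a b d \<circ> canon_col)"
proof -
  let ?V = "SG_verts n (Suc j)" and ?V1 = "SG_verts n j" and ?C = "K_verts (Suc j)"
  let ?\<sigma> = "cycle3 a b d"
  have n1: "n \<ge> 1" using n by simp
  have top_col_free: "canon_col S \<noteq> j+2" if "S \<in> ?V" "T \<in> ?V" "S \<inter> T = {}" "T \<notin> ?V1" for S T
  proof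
    assume "canon_col S = j+2"
    hence "2*n+j \<in> S" using SG_verts_Min_top[OF that(1) n1] by (simp add: canon_col_def)
    moreover have "2*n+j \<in> T" using SG_verts_Suc_top that(2,4) by blast
    ultimately show False using that(3) by blast
  qed
  have \<sigma>_top: "?\<sigma> x = j+2 \<Longrightarrow> x = j+2" for x
    using le by (auto simp: cycle3_def split: if_splits)
  define g1 where "g1 S = (if S \<in> ?V1 then canon_col S else j+2)" for S
  define g2 where "g2 S = (if S \<in> ?V1 then (?\<sigma> \<circ> canon_col) S else j+2)" for S
  have "hom_homotopic ?V SG_adj ?C K_adj g1 g2"
    unfolding g1_def g2_def
  proof (rule hom_homotopic_extend[where CA = "K_verts j" and CB = "{j+2}"])
    show "hom_homotopic ?V1 SG_adj (K_verts j) K_adj canon_col (?\<sigma> \<circ> canon_col)"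
      using IH dst le unfolding cycles_homotopic_def by blast
    show "\<forall>u\<in>?V - ?V1. \<forall>v\<in>?V - ?V1. SG_adj u v \<longrightarrow> j + 2 \<noteq> j + 2"
      using SG_verts_Suc_top[of _ n j] by (auto simp: SG_adj_def)
  qed (auto simp: K_verts_def)
  moreover have "hom_homotopic ?V SG_adj ?C K_adj canon_col g1"
  proof (rule hom_homotopic_step[OF canon_col_graph_hom[OF n1] hom_homotopic_imp_graph_hom(1)])
    show "map_sim ?V SG_adj K_adj canon_col g1"
      unfolding map_sim_def K_adj_def g1_def
      using canon_col_adj[OF _ _ n1] top_col_free by (auto simp: SG_adj_def)
  qed fact
  moreover have "hom_homotopic ?V SG_adj ?C K_adj g2 (?\<sigma> \<circ> canon_col)"
  proof (rule hom_homotopic_step[OF hom_homotopic_imp_graph_hom(2)])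
    show "graph_hom ?V SG_adj ?C K_adj (?\<sigma> \<circ> canon_col)"
      by (rule cycle3_canon_col_graph_hom) (use n1 dst le in auto)
    show "map_sim ?V SG_adj K_adj g2 (?\<sigma> \<circ> canon_col)"
      unfolding map_sim_def K_adj_def
    proof (intro ballI impI)
      fix S T assume ST: "S \<in> ?V" "T \<in> ?V" "SG_adj S T"
      show "g2 S \<noteq> (?\<sigma> \<circ> canon_col) T"
      proof (cases "S \<in> ?V1")
        case True
        thus ?thesis using canon_col_adj[OF ST(1,2) n1 ST(3)] injD[OF cycle3_inj[OF dst]]
          by (auto simp: g2_def)
      next
        case False
        have "canon_col T \<noteq> j+2" using top_col_free[OF ST(2,1) _ False] ST(3)
          by (auto simp: SG_adj_def)
        thus ?thesis using False \<sigma>_top by (auto simp: g2_def)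
      qed
    qed
  qed fact
  ultimately show ?thesis by (metis hom_homotopic_trans)
qed

lemma cycles_homotopic_step_fixing_zero:
  assumes n: "n \<ge> 2" and IH: "cycles_homotopic n j" and dst: "distinct [a,b,d]"
    and pos: "1 \<le> a" "1 \<le> b" "1 \<le> d" and le: "a \<le> j+2" "b \<le> j+2" "d \<le> j+2"
  shows "hom_homotopic (SG_verts n (Suc j)) SG_adj (K_verts (Suc j)) K_adj canon_col (cycle3 a b d \<circ> canon_col)"
proof -
  let ?V = "SG_verts n (Suc j)" and ?W = "SG_verts n j" and ?V1 = "{S \<in> SG_verts n (Suc j). 0 \<notin> S}"
  let ?shift = "\<lambda>S. (\<lambda>x. x - 1) ` S"
  let ?\<sigma>' = "cycle3 (a-1) (b-1) (d-1)"
  have n1: "n \<ge> 1" using n by simp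
  have "distinct [a-1, b-1, d-1]" "a-1 \<le> j+1" "b-1 \<le> j+1" "d-1 \<le> j+1" using dst pos le by auto
  hence "hom_homotopic ?W SG_adj (K_verts j) K_adj canon_col (?\<sigma>' \<circ> canon_col)"
    using IH unfolding cycles_homotopic_def by blast
  hence "hom_homotopic ?W SG_adj {1..j+2} K_adj (Suc \<circ> canon_col) (Suc \<circ> (?\<sigma>' \<circ> canon_col))"
    by (rule hom_homotopic_postcomp_inj) (auto simp: K_verts_def)
  hence "hom_homotopic ?V1 SG_adj {1..j+2} K_adj
      ((Suc \<circ> canon_col) \<circ> ?shift) ((Suc \<circ> (?\<sigma>' \<circ> canon_col)) \<circ> ?shift)"
  proof (rule hom_homotopic_precomp)
    show "\<forall>u\<in>?V1. ?shift u \<in> ?W" using SG_verts_shift_down(1) n1 by blast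
    have "x = y" if "x - 1 = y - 1" "x \<noteq> 0" "y \<noteq> 0" for x y :: nat using that by simp
    thus "\<forall>u\<in>?V1. \<forall>v\<in>?V1. SG_adj u v \<longrightarrow> SG_adj (?shift u) (?shift v)"
      unfolding SG_adj_def by (fastforce simp: disjoint_iff)
  qed
  hence "hom_homotopic ?V1 SG_adj {1..j+2} K_adj canon_col (cycle3 a b d \<circ> canon_col)"
  proof (rule hom_homotopic_cong; intro ballI)
    fix u assume u: "u \<in> ?V1"
    hence s: "Suc (Min (?shift u)) = Min u" using SG_verts_shift_down(2) n1 by blast
    show "((Suc \<circ> canon_col) \<circ> ?shift) u = canon_col u"
      using s by (simp add: canon_col_def)
    have "Min (?shift u) = Min u - 1" "1 \<le> Min u" using s by linarith+
    thus "((Suc \<circ> (?\<sigma>' \<circ> canon_col)) \<circ> ?shift) u = (cycle3 a b d \<circ> canon_col) u"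
      unfolding canon_col_def comp_def by (metis cycle3_shift[OF pos])
  qed
  hence "hom_homotopic ?V SG_adj (K_verts (Suc j)) K_adj (\<lambda>u. if u \<in> ?V1 then canon_col u else 0)
     (\<lambda>u. if u \<in> ?V1 then (cycle3 a b d \<circ> canon_col) u else 0)"
    by (rule hom_homotopic_extend[where CB = "{0}"]) (auto simp: SG_adj_def K_verts_def)
  moreover have "canon_col u = 0" if "u \<in> ?V" "0 \<in> u" for u
    using that SG_verts_props[OF that(1) n1] unfolding canon_col_def by (metis Min_le le_zero_eq)
  ultimately show ?thesis
    by (elim hom_homotopic_cong) (use pos in \<open>auto simp: cycle3_def\<close>)
qed

lemma cycles_homotopic_step_avoiding:
  assumes n: "n \<ge> 2" and IH: "cycles_homotopic n j" and dst: "distinct [x,y,z]"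
    and le: "x \<le> j+2" "y \<le> j+2" "z \<le> j+2"
    and avoid: "0 \<notin> {x,y,z} \<or> j+2 \<notin> {x,y,z}"
  shows "hom_homotopic (SG_verts n (Suc j)) SG_adj (K_verts (Suc j)) K_adj canon_col (cycle3 x y z \<circ> canon_col)"
  using avoid
proof
  assume "0 \<notin> {x,y,z}"
  thus ?thesis by (intro cycles_homotopic_step_fixing_zero[OF n IH dst]) (use le in auto)
next
  assume "j+2 \<notin> {x,y,z}"
  thus ?thesis by (intro cycles_homotopic_step_fixing_top[OF n IH dst]) (use le in auto)
qed

text \<open>A 3-cycle moving both \<open>0\<close> and the top colour factors through an auxiliary colour \<open>v\<close>
  into two 3-cycles, each fixing one of them.\<close>

lemma cycles_homotopic_step_through:
  assumes n: "n \<ge> 2" and j: "j \<ge> 1" and IH: "cycles_homotopic n j" and dst: "distinct [x,y,z]"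
    and le: "y \<le> j+2" and ends: "{x, z} = {0, j+2}"
  shows "hom_homotopic (SG_verts n (Suc j)) SG_adj (K_verts (Suc j)) K_adj canon_col (cycle3 x y z \<circ> canon_col)"
proof -
  let ?G = "hom_homotopic (SG_verts n (Suc j)) SG_adj (K_verts (Suc j)) K_adj"
  have xz: "(x = 0 \<and> z = j+2) \<or> (x = j+2 \<and> z = 0)" using ends by (simp add: doubleton_eq_iff)
  define v where "v = (if y = 1 then 2 else (1::nat))"
  have dv: "distinct [x,y,z,v]" using dst xz j by (auto simp: v_def)
  have d1: "distinct [x,y,v]" and d2: "distinct [y,z,v]" using dv by auto
  have vle: "v \<le> j+2" using j by (auto simp: v_def)
  have "?G canon_col (cycle3 x y v \<circ> canon_col)"
    by (rule cycles_homotopic_step_avoiding[OF n IH d1]) (use xz le vle dv in auto)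
  moreover have "?G (cycle3 x y v \<circ> canon_col) (cycle3 x y v \<circ> (cycle3 y z v \<circ> canon_col))"
  proof (rule hom_homotopic_postcomp_inj)
    show "?G canon_col (cycle3 y z v \<circ> canon_col)"
      by (rule cycles_homotopic_step_avoiding[OF n IH d2]) (use xz le vle dv in auto)
    show "cycle3 x y v ` K_verts (Suc j) \<subseteq> K_verts (Suc j)"
      using xz le vle by (auto simp: K_verts_def cycle3_def)
  qed (use cycle3_inj[OF d1] inj_on_subset in blast)
  moreover have "cycle3 x y v \<circ> (cycle3 y z v \<circ> canon_col) = cycle3 x y z \<circ> canon_col"
    using cycle3_split[OF dv] by (simp add: o_assoc)
  ultimately show ?thesis by (metis hom_homotopic_trans)
qed

lemma cycles_homotopic_Suc:
  assumes n: "n \<ge> 2" and j: "j \<ge> 1" and IH: "cycles_homotopic n j"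
  shows "cycles_homotopic n (Suc j)"
  unfolding cycles_homotopic_def
proof (intro allI impI, elim conjE)
  fix a b d assume dst: "distinct [a,b,d]" and le: "a \<le> Suc j + 1" "b \<le> Suc j + 1" "d \<le> Suc j + 1"
  let ?G = "\<lambda>f. hom_homotopic (SG_verts n (Suc j)) SG_adj (K_verts (Suc j)) K_adj canon_col (f \<circ> canon_col)"
  have rot: "cycle3 a b d = cycle3 b d a" "cycle3 a b d = cycle3 d a b"
    using cycle3_rotate[of a b d] cycle3_rotate[of b d a] dst by auto
  show "?G (cycle3 a b d)"
  proof (cases "0 \<notin> {a,b,d} \<or> j+2 \<notin> {a,b,d}")
    case True
    thus ?thesis by (intro cycles_homotopic_step_avoiding[OF n IH dst]) (use le in auto)
  next
    case False
    then consider "{a, d} = {0, j+2}" | "{b, a} = {0, j+2}" | "{d, b} = {0, j+2}"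
      using dst by auto
    thus ?thesis
    proof cases
      case 1
      thus ?thesis using cycles_homotopic_step_through[OF n j IH, of a b d] dst le by auto
    next
      case 2
      thus ?thesis using cycles_homotopic_step_through[OF n j IH, of b d a] dst le rot by auto
    next
      case 3
      thus ?thesis using cycles_homotopic_step_through[OF n j IH, of d a b] dst le rot by auto
    qed
  qed
qed

lemma canon_col_homotopic_cycle3:
  assumes "n \<ge> 2" "k \<ge> 1" "distinct [a,b,d]" "a \<in> K_verts k" "b \<in> K_verts k" "d \<in> K_verts k"
  shows "hom_homotopic (SG_verts n k) SG_adj (K_verts k) K_adj canon_col (cycle3 a b d \<circ> canon_col)"
proof -
  have "cycles_homotopic n k"
    using assms(2) by (induction k rule: nat_induct_at_least)
      (use assms(1) cycles_homotopic_base cycles_homotopic_Suc in auto)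
  thus ?thesis using assms(3-) unfolding cycles_homotopic_def K_verts_def by auto
qed

theorem proposition4p4:
  fixes n k :: nat and \<pi> :: "nat \<Rightarrow> nat"
  assumes "n \<ge> 2" and "k \<ge> 1"
    and "\<pi> permutes K_verts k" and "evenperm \<pi>"
  shows "hom_homotopic (SG_verts n k) SG_adj (K_verts k) K_adj canon_col (\<pi> \<circ> canon_col)"
  using assms(3) finite_K_verts assms(4)
proof (induction rule: evenperm_cycle3_induct)
  case id
  show ?case using hom_homotopic_refl[OF canon_col_graph_hom] assms(1) by simp
next
  case (cycle3 a b d q)
  have "hom_homotopic (SG_verts n k) SG_adj (K_verts k) K_adj
      (cycle3 a b d \<circ> canon_col) (cycle3 a b d \<circ> (q \<circ> canon_col))"
  proof (rule hom_homotopic_postcomp_inj)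
    show "inj_on (cycle3 a b d) (K_verts k)" using cycle3_inj[OF \<open>distinct [a,b,d]\<close>] inj_on_subset by blast
  qed (use cycle3 cycle3_in in \<open>auto simp: comp_def\<close>)
  moreover have "hom_homotopic (SG_verts n k) SG_adj (K_verts k) K_adj canon_col (cycle3 a b d \<circ> canon_col)"
    using canon_col_homotopic_cycle3 assms(1,2) cycle3 by blast
  ultimately show ?case by (metis hom_homotopic_trans comp_assoc)
qed

end
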